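(* Let $X$ be a finite set, let $k\ge 2$ be an integer, and let $\bm{c}$ be a choice function defined on the complete collection $\mathcal{B}=2^X$ of all non-empty subsets of $X$ (i.e. $\bm{c}(B)\in B$ for every non-empty $B\subseteq X$). Then $(\mathcal{B},\bm{c})$ is rationalizable with $k^{th}$-order choice under limited attention if and only if $\bm{c}$ satisfies both of the following axioms: (SARP$^k$) for all $x,y\in X$: if $x$ is $k^{th}$-order indirectly chosen over $y$, then $y$ is not $k^{th}$-order directly chosen over $x$; (WARP(LA$^k$)) for all non-empty $S,T\subseteq X$ and all $x,y\in S\cap T$ with $|T|\le k$: if $x=\bm{c}(S)$ and $y=\bm{c}(T)$, then $x=\bm{c}(S\setminus\{y\})$.
   Context: A strict preference relation on $X$ is a complete, transitive and asymmetric binary relation $\succ$. An attention filter is a map $\Gamma$ from non-empty subsets of $X$ to subsets of $X$ such that $\Gamma(B)\subseteq B$ for every $B$, and $\Gamma(B)=\Gamma(B\setminus\{x\})$ for every $B$ and every $x\in B\setminus\Gamma(B)$. A data set $(\mathcal{B},\bm{c})$, where $\mathcal{B}$ is a collection of non-empty subsets of $X$ and $\bm{c}(B)\in B$ for $B\in\mathcal{B}$, is rationalizable with $k^{th}$-order choice under limited attention if there exist a strict preference relation $\succ$ and an attention filter $\Gamma$ with $|\Gamma(B)|\ge\min\{|B|,k\}$ for all non-empty $B\subseteq X$, such that for every $B\in\mathcal{B}$, $\bm{c}(B)$ is the $\succ$-maximal element of $\Gamma(B)$. We say $x_1$ is $k^{th}$-order directly chosen over $x_2$ if there is $B\in\mathcal{B}$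 with $|B|\le k$, $x_1,x_2\in B$ and $x_1=\bm{c}(B)$. We say $x_1$ is $k^{th}$-order indirectly chosen over $x_n$ if there exist $x_2,\dots,x_{n-1}$ such that $x_i$ is $k^{th}$-order directly chosen over $x_{i+1}$ for each $i=1,\dots,n-1$. *)

theory Defs
  imports Main
begin

definition strict_pref :: "'a set \<Rightarrow> ('a \<times> 'a) set \<Rightarrow> bool" where
  "strict_pref X R \<longleftrightarrow> R \<subseteq> X \<times> X \<and> total_on X R \<and> trans R \<and> asym R"

definition attention_filter :: "'a set \<Rightarrow> ('a set \<Rightarrow> 'a set) \<Rightarrow> bool" where
  "attention_filter X \<Gamma> \<longleftrightarrow>
     (\<forall>B. B \<subseteq> X \<and> B \<noteq> {} \<longrightarrow> \<Gamma> B \<subseteq> B) \<and>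
     (\<forall>B x. B \<subseteq> X \<and> x \<in> B - \<Gamma> B \<and> B - {x} \<noteq> {} \<longrightarrow> \<Gamma> B = \<Gamma> (B - {x}))"

definition rationalizable_k :: "'a set \<Rightarrow> nat \<Rightarrow> 'a set set \<Rightarrow> ('a set \<Rightarrow> 'a) \<Rightarrow> bool" where
  "rationalizable_k X k \<BB> c \<longleftrightarrow>
     (\<exists>R \<Gamma>. strict_pref X R \<and> attention_filter X \<Gamma> \<and>
        (\<forall>B. B \<subseteq> X \<and> B \<noteq> {} \<longrightarrow> card (\<Gamma> B) \<ge> min (card B) k) \<and>
        (\<forall>B\<in>\<BB>. c B \<in> \<Gamma> B \<and> (\<forall>y\<in>\<Gamma> B. y \<noteq> c B \<longrightarrow> (c B, y) \<in> R)))"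

definition directly_chosen :: "nat \<Rightarrow> 'a set set \<Rightarrow> ('a set \<Rightarrow> 'a) \<Rightarrow> 'a \<Rightarrow> 'a \<Rightarrow> bool" where
  "directly_chosen k \<BB> c x1 x2 \<longleftrightarrow>
     (\<exists>B\<in>\<BB>. card B \<le> k \<and> x1 \<in> B \<and> x2 \<in> B \<and> x1 = c B)"

definition indirectly_chosen :: "nat \<Rightarrow> 'a set set \<Rightarrow> ('a set \<Rightarrow> 'a) \<Rightarrow> 'a \<Rightarrow> 'a \<Rightarrow> bool" where
  "indirectly_chosen k \<BB> c = (directly_chosen k \<BB> c)\<^sup>+\<^sup>+"

definition SARP_k :: "'a set \<Rightarrow> nat \<Rightarrow> 'a set set \<Rightarrow> ('a set \<Rightarrow> 'a) \<Rightarrow> bool" where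
  "SARP_k X k \<BB> c \<longleftrightarrow>
     (\<forall>x\<in>X. \<forall>y\<in>X. x \<noteq> y \<longrightarrow> indirectly_chosen k \<BB> c x y \<longrightarrow> \<not> directly_chosen k \<BB> c y x)"

definition WARP_LA_k :: "'a set \<Rightarrow> nat \<Rightarrow> ('a set \<Rightarrow> 'a) \<Rightarrow> bool" where
  "WARP_LA_k X k c \<longleftrightarrow>
     (\<forall>S T x y. S \<subseteq> X \<and> S \<noteq> {} \<and> T \<subseteq> X \<and> T \<noteq> {} \<and> x \<in> S \<inter> T \<and> y \<in> S \<inter> T \<and>
        x \<noteq> y \<and> card T \<le> k \<and> x = c S \<and> y = c T \<longrightarrow> x = c (S - {y}))"

end

theory Submission
  imports Defs "HOL-Library.Product_Lexorder"
begin

(* Call x revealed preferred to y if x is chosen from a set of at most k alternatives containing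
   y; SARP^k says exactly that this relation is acyclic.  Under a rationalization every set of at
   most k alternatives is fully attended, so the preference extends the revealed preference, which
   gives SARP^k; and if y = c(T) for a small T, then y is preferred to x = c(S), hence unattended
   in S and removable, which gives WARP(LA^k).  Conversely, extend the acyclic revealed preference
   to a strict preference and let the decision maker ignore exactly the alternatives better than
   c(B).  WARP(LA^k) applied to the pairs {x, c(B)} shows that removing such alternatives never
   changes the choice, so this is an attention filter.  If fewer than k alternatives were attended,
   adding back one ignored alternative u would give a set of at most k alternatives from which
   c(B) is chosen over u, although u is better than c(B). *)

abbreviation nonempty_subsets :: "'a set \<Rightarrow> 'a set set" where
  "nonempty_subsets X \<equiv> {B. B \<subseteq> X \<and> B \<noteq> {}}"

definition revealed_pref :: "nat \<Rightarrow> 'a set set \<Rightarrow> ('a set \<Rightarrow> 'a) \<Rightarrow> 'a rel" where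
  "revealed_pref k \<BB> c = {(x, y). x \<noteq> y \<and> directly_chosen k \<BB> c x y}"

lemma revealed_prefI:
  "B \<in> \<BB> \<Longrightarrow> card B \<le> k \<Longrightarrow> c B \<in> B \<Longrightarrow> y \<in> B \<Longrightarrow> y \<noteq> c B \<Longrightarrow>
   (c B, y) \<in> revealed_pref k \<BB> c"
  unfolding revealed_pref_def directly_chosen_def by auto

lemma revealed_pref_subset_Times:
  assumes "\<forall>B\<in>\<BB>. B \<subseteq> X"
  shows "revealed_pref k \<BB> c \<subseteq> X \<times> X"
  using assms unfolding revealed_pref_def directly_chosen_def by blast

lemma indirectly_chosen_if_trancl_revealed_pref:
  assumes "(x, y) \<in> (revealed_pref k \<BB> c)\<^sup>+"
  shows "indirectly_chosen k \<BB> c x y"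
  using assms unfolding indirectly_chosen_def
  by induction (auto simp: revealed_pref_def)

lemma rtrancl_revealed_pref_if_indirectly_chosen:
  assumes "indirectly_chosen k \<BB> c x y"
  shows "(x, y) \<in> (revealed_pref k \<BB> c)\<^sup>*"
  using assms unfolding indirectly_chosen_def
proof induction
  case (base y)
  then show ?case by (cases "x = y") (auto simp: revealed_pref_def)
next
  case (step y z)
  then show ?case
    by (cases "y = z") (auto simp: revealed_pref_def intro: rtrancl_into_rtrancl)
qed

lemma SARP_k_iff_acyclic_revealed_pref:
  assumes "\<forall>B\<in>\<BB>. B \<subseteq> X"
  shows "SARP_k X k \<BB> c \<longleftrightarrow> acyclic (revealed_pref k \<BB> c)"
proof
  assume sarp: "SARP_k X k \<BB> c"
  show "acyclic (revealed_pref k \<BB> c)"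
    unfolding acyclic_def
  proof (intro allI notI)
    fix x assume "(x, x) \<in> (revealed_pref k \<BB> c)\<^sup>+"
    then obtain y where "(x, y) \<in> (revealed_pref k \<BB> c)\<^sup>+" and yx: "(y, x) \<in> revealed_pref k \<BB> c"
      by (cases rule: tranclE) (auto simp: revealed_pref_def)
    then have "indirectly_chosen k \<BB> c x y"
      by (simp add: indirectly_chosen_if_trancl_revealed_pref)
    moreover have "x \<in> X" "y \<in> X"
      using yx revealed_pref_subset_Times[OF assms] by blast+
    moreover have "x \<noteq> y" "directly_chosen k \<BB> c y x"
      using yx by (auto simp: revealed_pref_def)
    ultimately show False
      using sarp unfolding SARP_k_def by blast
  qed
next
  assume acyc: "acyclic (revealed_pref k \<BB> c)"
  show "SARP_k X k \<BB> c"
    unfolding SARP_k_def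
  proof (intro ballI impI notI)
    fix x y
    assume xy: "x \<noteq> y" "indirectly_chosen k \<BB> c x y" "directly_chosen k \<BB> c y x"
    have "(x, y) \<in> (revealed_pref k \<BB> c)\<^sup>+"
      using rtranclD[OF rtrancl_revealed_pref_if_indirectly_chosen[OF xy(2)]] xy(1) by blast
    moreover have "(y, x) \<in> revealed_pref k \<BB> c"
      using xy(1,3) by (simp add: revealed_pref_def)
    ultimately have "(x, x) \<in> (revealed_pref k \<BB> c)\<^sup>+" by (rule trancl_into_trancl)
    with acyc show False by (simp add: acyclic_def)
  qed
qed

lemma strict_pref_asymD: "strict_pref X R \<Longrightarrow> (x, y) \<in> R \<Longrightarrow> (y, x) \<notin> R"
  unfolding strict_pref_def by (auto dest: asymD)

lemma acyclic_if_strict_pref: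
  assumes "strict_pref X R"
  shows "acyclic R"
  using assms strict_pref_asymD unfolding strict_pref_def acyclic_def by fastforce

lemma strict_pref_if_inj_on:
  fixes g :: "'a \<Rightarrow> 'b::linorder"
  assumes "inj_on g X"
  shows "strict_pref X {(x, y) \<in> X \<times> X. g x < g y}"
proof -
  have "total_on X {(x, y) \<in> X \<times> X. g x < g y}"
    unfolding total_on_def
  proof (intro ballI impI)
    fix x y assume "x \<in> X" "y \<in> X" "x \<noteq> y"
    then have "g x \<noteq> g y" using assms by (auto dest: inj_onD)
    with \<open>x \<in> X\<close> \<open>y \<in> X\<close> show "(x, y) \<in> {(x, y) \<in> X \<times> X. g x < g y} \<or>
        (y, x) \<in> {(x, y) \<in> X \<times> X. g x < g y}"
      by (auto simp: neq_iff)
  qed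
  then show ?thesis
    unfolding strict_pref_def by (auto simp: trans_def asym_on_def)
qed

lemma finite_acyclic_extends_to_strict_pref:
  assumes "finite X" "P \<subseteq> X \<times> X" "acyclic P"
  obtains R where "strict_pref X R" "P \<subseteq> R"
proof -
  define rank where "rank z = card {w \<in> X. (w, z) \<in> P\<^sup>+}" for z
  have rank_less: "rank x < rank y" if "(x, y) \<in> P\<^sup>+" for x y
  proof -
    have "x \<in> X" using that assms(2) by (auto elim: converse_tranclE)
    moreover have "(x, x) \<notin> P\<^sup>+" using assms(3) by (simp add: acyclic_def)
    ultimately have "{w \<in> X. (w, x) \<in> P\<^sup>+} \<subset> {w \<in> X. (w, y) \<in> P\<^sup>+}"
      using that by (auto intro: trancl_trans)
    then show ?thesis
      unfolding rank_def using assms(1) by (simp add: psubset_card_mono)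
  qed
  obtain f :: "'a \<Rightarrow> nat" where "inj_on f X"
    using assms(1) finite_imp_inj_to_nat_seg by blast
  then have "inj_on (\<lambda>x. (rank x, f x)) X"
    by (auto simp: inj_on_def)
  moreover have "P \<subseteq> {(x, y) \<in> X \<times> X. (rank x, f x) < (rank y, f y)}"
    using assms(2) rank_less by (auto simp: less_prod_def)
  ultimately show ?thesis
    using strict_pref_if_inj_on that by blast
qed

locale limited_attention_rationalization =
  fixes X :: "'a set" and k :: nat and c :: "'a set \<Rightarrow> 'a"
    and R :: "'a rel" and \<Gamma> :: "'a set \<Rightarrow> 'a set"
  assumes finite: "finite X"
    and strict_pref: "strict_pref X R"
    and attention_filter: "attention_filter X \<Gamma>"
    and card_attention: "B \<subseteq> X \<Longrightarrow> B \<noteq> {} \<Longrightarrow> min (card B) k \<le> card (\<Gamma> B)"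
    and choice_attended: "B \<subseteq> X \<Longrightarrow> B \<noteq> {} \<Longrightarrow> c B \<in> \<Gamma> B"
    and choice_pref: "B \<subseteq> X \<Longrightarrow> B \<noteq> {} \<Longrightarrow> y \<in> \<Gamma> B \<Longrightarrow> y \<noteq> c B \<Longrightarrow> (c B, y) \<in> R"

lemma limited_attention_rationalization_if_rationalizable_k:
  assumes "finite X" "rationalizable_k X k (nonempty_subsets X) c"
  obtains R \<Gamma> where "limited_attention_rationalization X k c R \<Gamma>"
proof -
  from assms(2) obtain R \<Gamma> where "strict_pref X R" "attention_filter X \<Gamma>"
    "\<forall>B. B \<subseteq> X \<and> B \<noteq> {} \<longrightarrow> min (card B) k \<le> card (\<Gamma> B)"
    "\<forall>B\<in>nonempty_subsets X. c B \<in> \<Gamma> B \<and> (\<forall>y\<in>\<Gamma> B. y \<noteq> c B \<longrightarrow> (c B, y) \<in> R)"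
    unfolding rationalizable_k_def by blast
  with assms(1) have "limited_attention_rationalization X k c R \<Gamma>"
    by unfold_locales auto
  then show thesis by (rule that)
qed

context limited_attention_rationalization
begin

lemmas asym = strict_pref_asymD[OF strict_pref]

lemma attention_subset: "B \<subseteq> X \<Longrightarrow> B \<noteq> {} \<Longrightarrow> \<Gamma> B \<subseteq> B"
  using attention_filter unfolding attention_filter_def by blast

lemma attention_Diff_unattended:
  "B \<subseteq> X \<Longrightarrow> x \<in> B - \<Gamma> B \<Longrightarrow> B - {x} \<noteq> {} \<Longrightarrow> \<Gamma> (B - {x}) = \<Gamma> B"
  using attention_filter unfolding attention_filter_def by metis

lemma attention_eq_if_card_le:
  assumes "B \<subseteq> X" "B \<noteq> {}" "card B \<le> k"
  shows "\<Gamma> B = B"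
proof -
  have "finite B" using assms(1) finite finite_subset by blast
  moreover have "card B \<le> card (\<Gamma> B)" using card_attention[OF assms(1,2)] assms(3) by simp
  ultimately show ?thesis using attention_subset[OF assms(1,2)] by (simp add: card_seteq)
qed

lemma choice_eq_if_attention_eq:
  assumes "B \<subseteq> X" "B \<noteq> {}" "B' \<subseteq> X" "B' \<noteq> {}" "\<Gamma> B = \<Gamma> B'"
  shows "c B = c B'"
  using assms choice_attended choice_pref asym by metis

lemma revealed_pref_subset: "revealed_pref k (nonempty_subsets X) c \<subseteq> R"
proof
  fix p assume "p \<in> revealed_pref k (nonempty_subsets X) c"
  then obtain y B where p: "p = (c B, y)" "y \<noteq> c B" "y \<in> B"
    and B: "B \<subseteq> X" "B \<noteq> {}" "card B \<le> k"
    unfolding revealed_pref_def directly_chosen_def by blast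
  then show "p \<in> R"
    using choice_pref[OF B(1,2)] attention_eq_if_card_le[OF B] by simp
qed

lemma SARP_k: "SARP_k X k (nonempty_subsets X) c"
proof -
  have "acyclic (revealed_pref k (nonempty_subsets X) c)"
    using acyclic_subset[OF acyclic_if_strict_pref[OF strict_pref] revealed_pref_subset] .
  then show ?thesis by (simp add: SARP_k_iff_acyclic_revealed_pref)
qed

lemma rationalizable_k: "rationalizable_k X k (nonempty_subsets X) c"
  unfolding rationalizable_k_def
  using strict_pref attention_filter card_attention choice_attended choice_pref
  by (intro exI[of _ R] exI[of _ \<Gamma>]) auto

lemma WARP_LA_k: "WARP_LA_k X k c"
  unfolding WARP_LA_k_def
proof (intro allI impI, elim conjE)
  fix S T x y
  assume S: "S \<subseteq> X" "S \<noteq> {}" and T: "T \<subseteq> X" "T \<noteq> {}" "card T \<le> k"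
    and xy: "x \<in> S \<inter> T" "y \<in> S \<inter> T" "x \<noteq> y" and choices: "x = c S" "y = c T"
  have "(y, x) \<in> R"
    using choice_pref[OF T(1,2)] attention_eq_if_card_le[OF T] xy choices by auto
  then have "y \<notin> \<Gamma> S"
    using choice_pref[OF S, of y] xy(3) choices(1) asym by metis
  then have "\<Gamma> (S - {y}) = \<Gamma> S"
    using attention_Diff_unattended[OF S(1)] xy by blast
  then show "x = c (S - {y})"
    using choice_eq_if_attention_eq[of S "S - {y}"] S xy choices by blast
qed

end

locale revealed_pref_extension =
  fixes X :: "'a set" and k :: nat and c :: "'a set \<Rightarrow> 'a" and R :: "'a rel"
  assumes finite: "finite X"
    and two_le_k: "2 \<le> k"
    and choice_in: "B \<subseteq> X \<Longrightarrow> B \<noteq> {} \<Longrightarrow> c B \<in> B"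
    and WARP: "WARP_LA_k X k c"
    and strict_pref: "strict_pref X R"
    and revealed_pref_subset: "revealed_pref k (nonempty_subsets X) c \<subseteq> R"
begin

lemmas asym = strict_pref_asymD[OF strict_pref]

definition attention :: "'a set \<Rightarrow> 'a set" where
  "attention B = {y \<in> B. (y, c B) \<notin> R}"

lemma choice_Diff_better:
  assumes B: "B \<subseteq> X" "x \<in> B" "(x, c B) \<in> R"
  shows "c (B - {x}) = c B"
proof -
  let ?T = "{x, c B}"
  have cB: "c B \<in> B" "x \<noteq> c B" using choice_in B asym by blast+
  have T: "?T \<subseteq> X" "card ?T \<le> k" using B cB two_le_k by auto
  have "c ?T = x"
  proof (rule ccontr)
    assume "c ?T \<noteq> x"
    then have "c ?T = c B" using choice_in[OF T(1)] by blast
    then have "(c B, x) \<in> revealed_pref k (nonempty_subsets X) c"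
      using revealed_prefI[of ?T "nonempty_subsets X" k c x] T cB by auto
    then show False using revealed_pref_subset asym B(3) by blast
  qed
  moreover have "B \<noteq> {}" using B(2) by blast
  ultimately show ?thesis
    using WARP[unfolded WARP_LA_k_def, rule_format, of B ?T "c B" x] B T cB by auto
qed

lemma choice_Diff_unattended:
  assumes "B \<subseteq> X" "B \<noteq> {}" "W \<subseteq> B - attention B"
  shows "c (B - W) = c B"
proof -
  have "W \<subseteq> X" using assms(1,3) by blast
  then have "finite W" using finite by (rule finite_subset)
  from this assms(3) show ?thesis
  proof induction
    case (insert w W)
    then have "c (B - W) = c B" by blast
    moreover have "w \<in> B - W" "(w, c B) \<in> R"
      using insert unfolding attention_def by auto
    ultimately have "c (B - W - {w}) = c B"
      using choice_Diff_better[of "B - W" w] assms(1) by auto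
    moreover have "B - insert w W = B - W - {w}" by blast
    ultimately show ?case by simp
  qed simp
qed

lemma attention_filter_attention: "attention_filter X attention"
  unfolding attention_filter_def
proof (intro conjI allI impI)
  fix B x assume "B \<subseteq> X \<and> x \<in> B - attention B \<and> B - {x} \<noteq> {}"
  moreover from this have "c (B - {x}) = c B"
    using choice_Diff_better unfolding attention_def by blast
  ultimately show "attention B = attention (B - {x})"
    unfolding attention_def by auto
qed (auto simp: attention_def)

lemma choice_attended: "B \<subseteq> X \<Longrightarrow> B \<noteq> {} \<Longrightarrow> c B \<in> attention B"
  using choice_in asym unfolding attention_def by blast

lemma choice_pref: "B \<subseteq> X \<Longrightarrow> B \<noteq> {} \<Longrightarrow> y \<in> attention B \<Longrightarrow> y \<noteq> c B \<Longrightarrow> (c B, y) \<in> R"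
  using choice_in strict_pref unfolding attention_def strict_pref_def total_on_def by blast

lemma card_attention:
  assumes B: "B \<subseteq> X" "B \<noteq> {}"
  shows "min (card B) k \<le> card (attention B)"
proof (cases "attention B = B")
  case False
  then obtain u where u: "u \<in> B" "(u, c B) \<in> R" unfolding attention_def by blast
  have "k \<le> card (attention B)"
  proof (rule ccontr)
    assume small: "\<not> k \<le> card (attention B)"
    define B' where "B' = insert u (attention B)"
    have "u \<notin> attention B" "u \<noteq> c B"
      using u asym unfolding attention_def by blast+
    have "attention B \<subseteq> X" using B(1) unfolding attention_def by blast
    then have "finite (attention B)" using finite by (rule finite_subset)
    then have "card B' \<le> k" using small \<open>u \<notin> attention B\<close> unfolding B'_def by simp
    have "c (B - (B - attention B - {u})) = c B" by (rule choice_Diff_unattended[OF B]) blast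
    moreover have "B - (B - attention B - {u}) = B'"
      using u(1) unfolding B'_def attention_def by blast
    ultimately have "c B' = c B" by simp
    moreover have "B' \<in> nonempty_subsets X" "c B \<in> B'" "u \<in> B'"
      using B choice_attended[OF B] u(1) unfolding B'_def attention_def by blast+
    ultimately have "(c B, u) \<in> revealed_pref k (nonempty_subsets X) c"
      using revealed_prefI[of B' _ k c u] \<open>card B' \<le> k\<close> \<open>u \<noteq> c B\<close> by simp
    then show False using revealed_pref_subset asym u(2) by blast
  qed
  then show ?thesis by simp
qed simp

sublocale limited_attention_rationalization X k c R attention
  using finite strict_pref attention_filter_attention card_attention choice_attended choice_pref
  by unfold_locales

end

theorem theorem1:
  fixes X :: "'a set" and k :: nat and c :: "'a set \<Rightarrow> 'a"
  assumes "finite X" and "k \<ge> 2"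
    and "\<And>B. B \<subseteq> X \<Longrightarrow> B \<noteq> {} \<Longrightarrow> c B \<in> B"
  shows "rationalizable_k X k {B. B \<subseteq> X \<and> B \<noteq> {}} c \<longleftrightarrow>
         SARP_k X k {B. B \<subseteq> X \<and> B \<noteq> {}} c \<and> WARP_LA_k X k c"
proof
  assume "rationalizable_k X k {B. B \<subseteq> X \<and> B \<noteq> {}} c"
  with assms(1) obtain R \<Gamma> where "limited_attention_rationalization X k c R \<Gamma>"
    by (rule limited_attention_rationalization_if_rationalizable_k)
  then show "SARP_k X k {B. B \<subseteq> X \<and> B \<noteq> {}} c \<and> WARP_LA_k X k c"
    using limited_attention_rationalization.SARP_k limited_attention_rationalization.WARP_LA_k
    by blast
next
  assume axioms: "SARP_k X k {B. B \<subseteq> X \<and> B \<noteq> {}} c \<and> WARP_LA_k X k c"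
  then have "acyclic (revealed_pref k (nonempty_subsets X) c)"
    by (simp add: SARP_k_iff_acyclic_revealed_pref)
  moreover have "revealed_pref k (nonempty_subsets X) c \<subseteq> X \<times> X"
    by (simp add: revealed_pref_subset_Times)
  ultimately obtain R where "strict_pref X R" "revealed_pref k (nonempty_subsets X) c \<subseteq> R"
    using assms(1) finite_acyclic_extends_to_strict_pref by blast
  then interpret revealed_pref_extension X k c R
    using assms axioms by unfold_locales blast+
  show "rationalizable_k X k {B. B \<subseteq> X \<and> B \<noteq> {}} c"
    by (rule rationalizable_k)
qed

end
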